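(* Let $k\ge1$. For all $\ell$ with $k<\ell\le n+1$ and all $r\in\{0,1,\dots,k\}$, $$\mathbb{E}[v(\mathrm{ALG}^{\ge\ell}_r)]\ \ge\ \sum_{j=\ell}^{n}\frac{a_{\ell,j-1}}{j}\,\mathbb{E}[v(\mathcal{A}(U^{\le j}))]\sum_{r'=0}^{r-1}\ \sum_{\substack{M\subseteq\{\ell,\dots,j-1\}\\|M|=r'}}\ \prod_{i\in M}\frac{k-1}{i},$$ where $a_{\ell,j-1}=\prod_{i=\ell}^{j-1}\left(1-\frac{k}{i}\right)$ (an empty product equals $1$).
   Context: Let $U$ be a finite ground set of $n$ items and $k\ge1$ an integer. Let $v\colon 2^U\to\mathbb{R}_{\ge0}$ be monotone and submodular. The items arrive one per round (rounds $1,\dots,n$) in a uniformly random order; $U^{\le \ell}$ denotes the set of items arriving in rounds $1,\dots,\ell$. $\mathcal{A}$ is an offline algorithm that, for every $L\subseteq U$, returns a set $\mathcal{A}(L)\subseteq L$ with $|\mathcal{A}(L)|\le k$, depending only on the set $L$ (e.g. an $\alpha$-approximation for $\max\{v(T):T\subseteq L,|T|\le k\}$). Random sets $\mathrm{ALG}^{\ge\ell}_r\subseteq U$ for $\ell\in\{1,\dots,n+1\}$, $r\in\{0,\dots,k\}$ are defined recursively: $\mathrm{ALG}^{\ge\ell}_0=\emptyset$ for all $\ell$, $\mathrm{ALG}^{\ge n+1}_r=\emptyset$ for all $r$, and for $\ell\in[n]$, $r\ge1$, letting $j$ be the item arriving in round $\ell$: $\mathrm{ALG}^{\ge\ell}_r=\{j\}\cup\mathrm{ALG}^{\ge\ell+1}_{r-1}$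 if $j\in\mathcal{A}(U^{\le\ell})$, and $\mathrm{ALG}^{\ge\ell}_r=\mathrm{ALG}^{\ge\ell+1}_{r}$ otherwise. *)

theory Defs
  imports Complex_Main "HOL-Combinatorics.Multiset_Permutations"
begin

text \<open>An arrival order of the ground set U is a list xs enumerating U without
repetition; the item arriving in round l (1-based) is xs ! (l-1), and the set of
items arriving in rounds 1..l is set (take l xs). A uniformly random order is the
uniform distribution over permutations_of_set U.\<close>

definition expect_order :: "'a set \<Rightarrow> ('a list \<Rightarrow> real) \<Rightarrow> real" where
  "expect_order U f =
     (\<Sum>xs\<in>permutations_of_set U. f xs) / real (card (permutations_of_set U))"

definition prefix_set :: "'a list \<Rightarrow> nat \<Rightarrow> 'a set" where
  "prefix_set xs l = set (take l xs)"

definition monotone_set_fun :: "'a set \<Rightarrow> ('a set \<Rightarrow> real) \<Rightarrow> bool" where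
  "monotone_set_fun U v \<longleftrightarrow> (\<forall>S T. S \<subseteq> T \<and> T \<subseteq> U \<longrightarrow> v S \<le> v T)"

definition submodular_set_fun :: "'a set \<Rightarrow> ('a set \<Rightarrow> real) \<Rightarrow> bool" where
  "submodular_set_fun U v \<longleftrightarrow>
     (\<forall>S T. S \<subseteq> U \<and> T \<subseteq> U \<longrightarrow> v (S \<union> T) + v (S \<inter> T) \<le> v S + v T)"

function alg_set :: "('a set \<Rightarrow> 'a set) \<Rightarrow> 'a list \<Rightarrow> nat \<Rightarrow> nat \<Rightarrow> 'a set" where
  "alg_set A xs l 0 = {}"
| "alg_set A xs l (Suc r) =
     (if 1 \<le> l \<and> l \<le> length xs then
        (if xs ! (l - 1) \<in> A (prefix_set xs l)
         then insert (xs ! (l - 1)) (alg_set A xs (l + 1) r)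
         else alg_set A xs (l + 1) (Suc r))
      else {})"
  by pat_completeness auto
termination
  by (relation "measure (\<lambda>(A, xs, l, r). length xs + 1 - l)") auto

end

theory Submission
  imports Defs
begin

text \<open>In a uniformly random order, the set of the first l items determines all prefix sets
  from round l on, and given this set the item of round l is uniform among its l elements:
  swapping it with an earlier item changes nothing else. That item is one of the at most k
  items A picks from the prefix with probability at most k/l, and submodularity over the
  picked items yields, writing E(l, r) for the expected value of ALG(l, r) and G(l) for that
  of A on the first l items,
  E(l, r+1) \<ge> G(l)/l + (k-1)/l E(l+1, r) + (1 - k/l) E(l+1, r+1).
  The claimed bound satisfies this recursion with equality (split the elementary symmetric
  sums over {l..j-1} according to whether they contain l) and vanishes at l = n+1, so it
  follows by downward induction on l.\<close>

(* The recursive equation for alg_set loops under simp: its right-hand side contains the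
   same pattern with l + 1. It is only unfolded at explicit instances. *)
declare alg_set.simps(2)[simp del]

lemma alg_set_subset: "alg_set A xs l r \<subseteq> set xs"
proof (induction A xs l r rule: alg_set.induct)
  case (2 A xs l r)
  then show ?case
    unfolding alg_set.simps(2)[of A xs l r] by auto
qed simp

lemma alg_set_subset_Suc: "alg_set A xs l r \<subseteq> alg_set A xs l (Suc r)"
proof (induction A xs l r rule: alg_set.induct)
  case (2 A xs l r)
  then show ?case
    unfolding alg_set.simps(2)[of A xs l r] alg_set.simps(2)[of A xs l "Suc r"] by auto
qed simp

lemma alg_set_cong:
  assumes "length xs = length ys"
    and "\<And>m. l \<le> m \<Longrightarrow> m \<le> length xs \<Longrightarrow> prefix_set xs m = prefix_set ys m"
    and "\<And>p. l \<le> Suc p \<Longrightarrow> p < length xs \<Longrightarrow> xs ! p = ys ! p"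
  shows "alg_set A xs l r = alg_set A ys l r"
  using assms
proof (induction A xs l r rule: alg_set.induct)
  case (2 A xs l r)
  then show ?case
    by (auto simp: alg_set.simps(2)[of A xs l r] alg_set.simps(2)[of A ys l r])
qed simp

lemma prefix_set_subset: "prefix_set xs l \<subseteq> set xs"
  by (simp add: prefix_set_def set_take_subset)

lemma sum_nth_eq_sum_prefix_set:
  assumes "distinct xs" "l \<le> length xs"
  shows "(\<Sum>i<l. f (xs ! i)) = (\<Sum>x\<in>prefix_set xs l. f x)"
proof -
  have "prefix_set xs l = (!) xs ` {..<l}"
    using assms(2) nth_image[of l xs] by (simp add: prefix_set_def lessThan_atLeast0)
  moreover have "inj_on ((!) xs) {..<l}"
    using assms by (intro inj_on_nth) auto
  ultimately show ?thesis by (simp add: sum.reindex)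
qed

definition swap_pos :: "nat \<Rightarrow> nat \<Rightarrow> 'a list \<Rightarrow> 'a list" where
  "swap_pos i j xs = xs[i := xs ! j, j := xs ! i]"

lemma length_swap_pos [simp]: "length (swap_pos i j xs) = length xs"
  by (simp add: swap_pos_def)

lemma nth_swap_pos:
  "i < length xs \<Longrightarrow> j < length xs \<Longrightarrow> p < length xs \<Longrightarrow>
   swap_pos i j xs ! p = (if p = j then xs ! i else if p = i then xs ! j else xs ! p)"
  by (auto simp: swap_pos_def nth_list_update)

lemma swap_pos_swap_pos:
  "i < length xs \<Longrightarrow> j < length xs \<Longrightarrow> swap_pos i j (swap_pos i j xs) = xs"
  by (rule nth_equalityI) (auto simp: nth_swap_pos)

lemma swap_pos_in_permutations_of_set:
  "i < length xs \<Longrightarrow> j < length xs \<Longrightarrow> xs \<in> permutations_of_set U \<Longrightarrow>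
   swap_pos i j xs \<in> permutations_of_set U"
  by (auto simp: swap_pos_def permutations_of_set_def)

lemma prefix_set_swap_pos:
  assumes "i < m" "j < m" "m \<le> length xs"
  shows "prefix_set (swap_pos i j xs) m = prefix_set xs m"
proof -
  have "take m (swap_pos i j xs) = (take m xs)[i := take m xs ! j, j := take m xs ! i]"
    using assms by (simp add: swap_pos_def take_update_swap)
  moreover have "set ((take m xs)[i := take m xs ! j, j := take m xs ! i]) = set (take m xs)"
    using assms by (intro set_swap) auto
  ultimately show ?thesis
    by (simp add: prefix_set_def)
qed

lemma alg_set_swap_pos:
  assumes "i < l" "l \<le> length xs"
  shows "alg_set A (swap_pos i (l - 1) xs) l (Suc r) =
    (if xs ! i \<in> A (prefix_set xs l) then insert (xs ! i) (alg_set A xs (Suc l) r)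
     else alg_set A xs (Suc l) (Suc r))"
proof -
  let ?ys = "swap_pos i (l - 1) xs"
  have later: "alg_set A ?ys (Suc l) q = alg_set A xs (Suc l) q" for q
    using assms by (intro alg_set_cong) (auto simp: prefix_set_swap_pos nth_swap_pos)
  have "?ys ! (l - 1) = xs ! i" "prefix_set ?ys l = prefix_set xs l"
    using assms by (auto simp: nth_swap_pos prefix_set_swap_pos)
  then show ?thesis
    unfolding alg_set.simps(2)[of A ?ys l r] using assms later[of r] later[of "Suc r"] by simp
qed

lemma expect_order_nonneg:
  "(\<And>xs. xs \<in> permutations_of_set U \<Longrightarrow> 0 \<le> f xs) \<Longrightarrow> 0 \<le> expect_order U f"
  unfolding expect_order_def by (intro divide_nonneg_nonneg sum_nonneg) auto

lemma expect_order_mono: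
  "(\<And>xs. xs \<in> permutations_of_set U \<Longrightarrow> f xs \<le> g xs) \<Longrightarrow> expect_order U f \<le> expect_order U g"
  unfolding expect_order_def by (intro divide_right_mono sum_mono) auto

lemma expect_order_add:
  "expect_order U (\<lambda>xs. f xs + g xs) = expect_order U f + expect_order U g"
  by (simp add: expect_order_def sum.distrib add_divide_distrib)

lemma expect_order_mult_left:
  "expect_order U (\<lambda>xs. c * f xs) = c * expect_order U f"
  by (simp add: expect_order_def sum_distrib_left)

lemma expect_order_sum:
  "expect_order U (\<lambda>xs. \<Sum>i\<in>I. f i xs) = (\<Sum>i\<in>I. expect_order U (f i))"
  by (simp add: expect_order_def sum.swap[of _ I] sum_divide_distrib)

lemma expect_order_v_nonneg:
  assumes "\<forall>S. S \<subseteq> U \<longrightarrow> 0 \<le> v S"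
    and "\<And>xs. xs \<in> permutations_of_set U \<Longrightarrow> F xs \<subseteq> set xs"
  shows "0 \<le> expect_order U (\<lambda>xs. v (F xs))"
proof (rule expect_order_nonneg)
  fix xs assume xs: "xs \<in> permutations_of_set U"
  have "F xs \<subseteq> U"
    using assms(2)[OF xs] permutations_of_setD(1)[OF xs] by simp
  then show "0 \<le> v (F xs)"
    using assms(1) by simp
qed

lemma expect_order_swap_pos:
  assumes "i < card U" "j < card U"
  shows "expect_order U (\<lambda>xs. f (swap_pos i j xs)) = expect_order U f"
proof -
  have "(\<Sum>xs\<in>permutations_of_set U. f (swap_pos i j xs)) = (\<Sum>xs\<in>permutations_of_set U. f xs)"
    using assms
    by (intro sum.reindex_bij_witness[where i = "swap_pos i j" and j = "swap_pos i j"])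
       (auto simp: length_finite_permutations_of_set swap_pos_swap_pos swap_pos_in_permutations_of_set)
  then show ?thesis by (simp add: expect_order_def)
qed

lemma submodular_marginal_sum:
  assumes sub: "submodular_set_fun U v" and "finite B" "B \<subseteq> U" "S \<subseteq> U"
  shows "v (B \<union> S) - v S \<le> (\<Sum>x\<in>B. v (insert x S) - v S)"
  using assms(2,3)
proof (induction B rule: finite_induct)
  case (insert x B)
  have "v (insert x S \<union> (B \<union> S)) + v (insert x S \<inter> (B \<union> S)) \<le> v (insert x S) + v (B \<union> S)"
    using insert.prems assms(4)
    by (intro sub[unfolded submodular_set_fun_def, rule_format] conjI) auto
  moreover have "insert x S \<inter> (B \<union> S) = S" "insert x S \<union> (B \<union> S) = insert x B \<union> S"
    using insert.hyps(2) by auto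
  ultimately show ?case using insert by simp
qed simp

lemma submodular_sum_insert_ge:
  assumes mono: "monotone_set_fun U v" and sub: "submodular_set_fun U v"
    and "finite B" "B \<subseteq> U" "S \<subseteq> U"
  shows "v B + (real (card B) - 1) * v S \<le> (\<Sum>x\<in>B. v (insert x S))"
proof -
  have "v B \<le> v (B \<union> S)"
    using mono assms(4,5) unfolding monotone_set_fun_def by auto
  then show ?thesis
    using submodular_marginal_sum[OF sub assms(3-5)] by (simp add: sum_subtractf algebra_simps)
qed

lemma sum_alg_set_swap_pos_ge:
  assumes "finite U" and xs: "xs \<in> permutations_of_set U" and l: "l \<le> card U"
    and mono: "monotone_set_fun U v" and sub: "submodular_set_fun U v"
    and A: "\<forall>L. L \<subseteq> U \<longrightarrow> A L \<subseteq> L \<and> card (A L) \<le> k"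
  shows "v (A (prefix_set xs l)) + (real k - 1) * v (alg_set A xs (Suc l) r)
           + (real l - real k) * v (alg_set A xs (Suc l) (Suc r))
         \<le> (\<Sum>i<l. v (alg_set A (swap_pos i (l - 1) xs) l (Suc r)))"
proof -
  define L where "L = prefix_set xs l"
  define S where "S = alg_set A xs (Suc l) r"
  define T where "T = alg_set A xs (Suc l) (Suc r)"
  have len: "length xs = card U" and dist: "distinct xs" and set_xs: "set xs = U"
    using xs by (auto simp: length_finite_permutations_of_set dest: permutations_of_setD)
  have LU: "L \<subseteq> U" and card_L: "card L = l"
    using l len dist set_xs prefix_set_subset[of xs l] by (auto simp: L_def prefix_set_def distinct_card)
  have AL: "A L \<subseteq> L" "card (A L) \<le> k"
    using A LU by auto
  have fin_L: "finite L"
    using LU assms(1) by (rule finite_subset)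
  have fin_AL: "finite (A L)"
    using AL(1) fin_L by (rule finite_subset)
  have SU: "S \<subseteq> U" "T \<subseteq> U" and ST: "S \<subseteq> T"
    using alg_set_subset[of A xs] alg_set_subset_Suc[of A xs "Suc l" r] set_xs by (auto simp: S_def T_def)
  define g where "g x = (if x \<in> A L then v (insert x S) else v T)" for x
  have "alg_set A (swap_pos i (l - 1) xs) l (Suc r) =
      (if xs ! i \<in> A L then insert (xs ! i) S else T)" if "i < l" for i
    unfolding L_def S_def T_def using that l len by (intro alg_set_swap_pos) simp_all
  then have "(\<Sum>i<l. v (alg_set A (swap_pos i (l - 1) xs) l (Suc r))) = (\<Sum>i<l. g (xs ! i))"
    by (intro sum.cong) (simp_all add: g_def)
  also have "\<dots> = (\<Sum>x\<in>L. g x)"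
    using l len dist by (simp add: sum_nth_eq_sum_prefix_set L_def)
  also have "\<dots> = (\<Sum>x\<in>A L. v (insert x S)) + (real l - real (card (A L))) * v T"
    unfolding g_def using AL fin_L card_L card_mono[OF fin_L AL(1)]
    by (simp add: sum.subset_diff[OF AL(1) fin_L] card_Diff_subset[OF fin_AL AL(1)])
  finally have sum_eq: "(\<Sum>i<l. v (alg_set A (swap_pos i (l - 1) xs) l (Suc r)))
      = (\<Sum>x\<in>A L. v (insert x S)) + (real l - real (card (A L))) * v T" .
  have "v (A L) + (real (card (A L)) - 1) * v S \<le> (\<Sum>x\<in>A L. v (insert x S))"
    using AL(1) LU SU by (intro submodular_sum_insert_ge[OF mono sub fin_AL]) auto
  moreover have "0 \<le> (real k - real (card (A L))) * (v T - v S)"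
    using AL(2) ST SU mono unfolding monotone_set_fun_def by simp
  ultimately show ?thesis
    unfolding sum_eq by (simp add: L_def S_def T_def algebra_simps)
qed

lemma expect_alg_set_Suc_ge:
  assumes "finite U" "1 \<le> l" "l \<le> card U"
    and mono: "monotone_set_fun U v" and sub: "submodular_set_fun U v"
    and A: "\<forall>L. L \<subseteq> U \<longrightarrow> A L \<subseteq> L \<and> card (A L) \<le> k"
  shows "expect_order U (\<lambda>xs. v (A (prefix_set xs l))) / real l
       + (real k - 1) / real l * expect_order U (\<lambda>xs. v (alg_set A xs (Suc l) r))
       + (1 - real k / real l) * expect_order U (\<lambda>xs. v (alg_set A xs (Suc l) (Suc r)))
     \<le> expect_order U (\<lambda>xs. v (alg_set A xs l (Suc r)))"
proof -
  let ?E = "expect_order U"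
  let ?G = "?E (\<lambda>xs. v (A (prefix_set xs l)))"
  let ?S = "?E (\<lambda>xs. v (alg_set A xs (Suc l) r))"
  let ?T = "?E (\<lambda>xs. v (alg_set A xs (Suc l) (Suc r)))"
  define F where "F = (\<lambda>xs. v (alg_set A xs l (Suc r)))"
  have l_pos: "0 < real l"
    using assms(2) by simp
  have "?G + (real k - 1) * ?S + (real l - real k) * ?T
     = ?E (\<lambda>xs. v (A (prefix_set xs l)) + (real k - 1) * v (alg_set A xs (Suc l) r)
                  + (real l - real k) * v (alg_set A xs (Suc l) (Suc r)))"
    by (simp add: expect_order_add expect_order_mult_left)
  also have "\<dots> \<le> ?E (\<lambda>xs. \<Sum>i<l. F (swap_pos i (l - 1) xs))"
    unfolding F_def
    by (intro expect_order_mono sum_alg_set_swap_pos_ge[OF assms(1) _ assms(3) mono sub A])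
  also have "\<dots> = (\<Sum>i<l. ?E (\<lambda>xs. F (swap_pos i (l - 1) xs)))"
    by (rule expect_order_sum)
  also have "\<dots> = real l * ?E F"
    using assms(2,3) by (simp add: expect_order_swap_pos)
  finally have sum_le: "?G + (real k - 1) * ?S + (real l - real k) * ?T \<le> real l * ?E F" .
  have "?G / real l + (real k - 1) / real l * ?S + (1 - real k / real l) * ?T
      = (?G + (real k - 1) * ?S + (real l - real k) * ?T) / real l"
    using l_pos by (simp add: field_simps)
  also have "\<dots> \<le> ?E F"
    using sum_le l_pos by (simp add: pos_divide_le_eq mult.commute)
  finally show ?thesis
    unfolding F_def .
qed

definition elem_sym :: "('a \<Rightarrow> 'b::comm_semiring_1) \<Rightarrow> 'a set \<Rightarrow> nat \<Rightarrow> 'b" where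
  "elem_sym c B r = (\<Sum>M \<in> {M. M \<subseteq> B \<and> card M = r}. \<Prod>i\<in>M. c i)"

lemma subsets_insert_card_Suc:
  assumes "finite B" "x \<notin> B"
  shows "{M. M \<subseteq> insert x B \<and> card M = Suc r} =
    {M. M \<subseteq> B \<and> card M = Suc r} \<union> insert x ` {M. M \<subseteq> B \<and> card M = r}"
proof (intro equalityI subsetI)
  fix M assume M: "M \<in> {M. M \<subseteq> insert x B \<and> card M = Suc r}"
  then have "finite M" using assms(1) finite_subset by auto
  then show "M \<in> {M. M \<subseteq> B \<and> card M = Suc r} \<union> insert x ` {M. M \<subseteq> B \<and> card M = r}"
    using M by (cases "x \<in> M") (auto intro!: image_eqI[of _ _ "M - {x}"])
next
  fix M assume "M \<in> {M. M \<subseteq> B \<and> card M = Suc r} \<union> insert x ` {M. M \<subseteq> B \<and> card M = r}"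
  then show "M \<in> {M. M \<subseteq> insert x B \<and> card M = Suc r}"
    using assms finite_subset by (fastforce simp: card_insert_if)
qed

lemma elem_sym_insert:
  assumes "finite B" "x \<notin> B"
  shows "elem_sym c (insert x B) (Suc r) = elem_sym c B (Suc r) + c x * elem_sym c B r"
proof -
  let ?Sub = "\<lambda>r. {M. M \<subseteq> B \<and> card M = r}"
  have fin: "finite (?Sub r)" for r
    by (rule finite_subset[of _ "Pow B"]) (use assms(1) in auto)
  have disj: "?Sub (Suc r) \<inter> insert x ` ?Sub r = {}"
    using assms(2) by auto
  have inj: "inj_on (insert x) (?Sub r)"
  proof (rule inj_onI)
    fix M N assume "M \<in> ?Sub r" "N \<in> ?Sub r" "insert x M = insert x N"
    moreover have "x \<notin> M" "x \<notin> N"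
      using \<open>M \<in> ?Sub r\<close> \<open>N \<in> ?Sub r\<close> assms(2) by auto
    ultimately show "M = N"
      by (metis Diff_insert_absorb)
  qed
  have "elem_sym c (insert x B) (Suc r)
      = elem_sym c B (Suc r) + (\<Sum>M\<in>?Sub r. \<Prod>i\<in>insert x M. c i)"
    unfolding elem_sym_def subsets_insert_card_Suc[OF assms]
      sum.union_disjoint[OF fin finite_imageI[OF fin] disj] sum.reindex[OF inj]
    by simp
  also have "(\<Sum>M\<in>?Sub r. \<Prod>i\<in>insert x M. c i) = c x * elem_sym c B r"
    unfolding elem_sym_def sum_distrib_left
  proof (rule sum.cong[OF refl])
    fix M assume "M \<in> ?Sub r"
    then have "finite M" "x \<notin> M"
      using assms finite_subset by auto
    then show "(\<Prod>i\<in>insert x M. c i) = c x * (\<Prod>i\<in>M. c i)"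
      by simp
  qed
  finally show ?thesis .
qed

lemma elem_sym_0:
  assumes "finite B"
  shows "elem_sym c B 0 = 1"
proof -
  have "{M. M \<subseteq> B \<and> card M = 0} = {{}}"
    using assms by (auto dest: finite_subset)
  then show ?thesis by (simp add: elem_sym_def)
qed

lemma elem_sym_empty_Suc: "elem_sym c {} (Suc r) = 0"
  unfolding elem_sym_def by (intro sum.neutral) auto

definition elem_sym_below :: "('a \<Rightarrow> 'b::comm_semiring_1) \<Rightarrow> 'a set \<Rightarrow> nat \<Rightarrow> 'b" where
  "elem_sym_below c B r = (\<Sum>r' < r. elem_sym c B r')"

lemma elem_sym_below_Suc: "elem_sym_below c B (Suc r) = elem_sym_below c B r + elem_sym c B r"
  by (simp add: elem_sym_below_def)

lemma elem_sym_below_insert: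
  assumes "finite B" "x \<notin> B"
  shows "elem_sym_below c (insert x B) (Suc r) = elem_sym_below c B (Suc r) + c x * elem_sym_below c B r"
proof (induction r)
  case 0
  then show ?case
    using assms by (simp add: elem_sym_below_def elem_sym_0)
next
  case (Suc r)
  then show ?case
    using elem_sym_insert[OF assms, of c r] by (simp add: elem_sym_below_Suc algebra_simps)
qed

lemma elem_sym_below_empty_Suc: "elem_sym_below c {} (Suc r) = 1"
  by (induction r) (simp_all add: elem_sym_below_def elem_sym_0 elem_sym_empty_Suc)

lemma elem_sym_below_nonneg:
  fixes c :: "'a \<Rightarrow> 'b::linordered_semidom"
  shows "(\<And>i. i \<in> B \<Longrightarrow> 0 \<le> c i) \<Longrightarrow> 0 \<le> elem_sym_below c B r"
  unfolding elem_sym_below_def elem_sym_def by (intro sum_nonneg prod_nonneg) auto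

definition alg_bound :: "nat \<Rightarrow> nat \<Rightarrow> (nat \<Rightarrow> real) \<Rightarrow> nat \<Rightarrow> nat \<Rightarrow> real" where
  "alg_bound k n G l r = (\<Sum>j = l..n.
     (\<Prod>i = l..j - 1. (1 - real k / real i)) / real j * G j
     * elem_sym_below (\<lambda>i. (real k - 1) / real i) {l..j - 1} r)"

lemma alg_bound_nonneg:
  assumes "1 \<le> k" "k < l" "\<And>j. 0 \<le> G j"
  shows "0 \<le> alg_bound k n G l r"
  unfolding alg_bound_def using assms
  by (intro sum_nonneg mult_nonneg_nonneg divide_nonneg_nonneg prod_nonneg elem_sym_below_nonneg)
     (auto simp: divide_le_eq_1)

lemma alg_bound_Suc:
  assumes "1 \<le> l" "l \<le> n"
  shows "alg_bound k n G l (Suc r) = G l / real l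
    + (1 - real k / real l) * (alg_bound k n G (Suc l) (Suc r)
                               + (real k - 1) / real l * alg_bound k n G (Suc l) r)"
proof -
  let ?c = "\<lambda>i. (real k - 1) / real i"
  let ?a = "\<lambda>l j. \<Prod>i = l..j - 1. 1 - real k / real i"
  have "alg_bound k n G l (Suc r) = G l / real l
      + (\<Sum>j = Suc l..n. ?a l j / real j * G j * elem_sym_below ?c {l..j - 1} (Suc r))"
    using assms by (simp add: alg_bound_def sum.atLeast_Suc_atMost elem_sym_below_empty_Suc)
  also have "(\<Sum>j = Suc l..n. ?a l j / real j * G j * elem_sym_below ?c {l..j - 1} (Suc r))
     = (\<Sum>j = Suc l..n. (1 - real k / real l)
          * (?a (Suc l) j / real j * G j * elem_sym_below ?c {Suc l..j - 1} (Suc r)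
             + ?c l * (?a (Suc l) j / real j * G j * elem_sym_below ?c {Suc l..j - 1} r)))"
  proof (rule sum.cong[OF refl])
    fix j assume "j \<in> {Suc l..n}"
    then have split: "{l..j - 1} = insert l {Suc l..j - 1}"
      by auto
    have "?a l j = (1 - real k / real l) * ?a (Suc l) j"
      unfolding split by simp
    moreover have "elem_sym_below ?c {l..j - 1} (Suc r)
        = elem_sym_below ?c {Suc l..j - 1} (Suc r) + ?c l * elem_sym_below ?c {Suc l..j - 1} r"
      unfolding split by (rule elem_sym_below_insert) auto
    ultimately show "?a l j / real j * G j * elem_sym_below ?c {l..j - 1} (Suc r)
       = (1 - real k / real l)
          * (?a (Suc l) j / real j * G j * elem_sym_below ?c {Suc l..j - 1} (Suc r)
             + ?c l * (?a (Suc l) j / real j * G j * elem_sym_below ?c {Suc l..j - 1} r))"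
      by (simp only:) (simp add: divide_inverse algebra_simps)
  qed
  also have "\<dots> = (1 - real k / real l)
      * (alg_bound k n G (Suc l) (Suc r) + ?c l * alg_bound k n G (Suc l) r)"
    unfolding alg_bound_def by (simp only: distrib_left sum.distrib sum_distrib_left)
  finally show ?thesis .
qed

lemma alg_bound_le:
  fixes E :: "nat \<Rightarrow> nat \<Rightarrow> real"
  assumes "1 \<le> k" "k < l" "l \<le> n + 1"
    and G_nonneg: "\<And>j. 0 \<le> G j" and E_nonneg: "\<And>m q. 0 \<le> E m q"
    and E_rec: "\<And>m q. k < m \<Longrightarrow> m \<le> n \<Longrightarrow>
      G m / real m + (real k - 1) / real m * E (Suc m) q + (1 - real k / real m) * E (Suc m) (Suc q)
        \<le> E m (Suc q)"
  shows "alg_bound k n G l r \<le> E l r"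
  using assms(3)
proof (induction arbitrary: r rule: inc_induct)
  case base
  show ?case
    using E_nonneg by (simp add: alg_bound_def)
next
  case (step m)
  show ?case
  proof (cases r)
    case 0
    then show ?thesis
      using E_nonneg by (simp add: alg_bound_def elem_sym_below_def)
  next
    case (Suc q)
    define t where "t = 1 - real k / real m"
    define c where "c = (real k - 1) / real m"
    have m: "k < m" "1 \<le> m" "m \<le> n"
      using step.hyps assms(1,2) by auto
    have t: "0 \<le> t" "t \<le> 1" and c: "0 \<le> c"
      using m assms(1) by (auto simp: t_def c_def field_simps)
    have "alg_bound k n G m (Suc q)
        = G m / real m + t * alg_bound k n G (Suc m) (Suc q) + t * (c * alg_bound k n G (Suc m) q)"
      using m by (simp add: alg_bound_Suc t_def c_def distrib_left)
    also have "\<dots> \<le> G m / real m + t * E (Suc m) (Suc q) + c * E (Suc m) q"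
      using step.IH t c alg_bound_nonneg[OF assms(1) _ G_nonneg, where l = "Suc m" and n = n and r = q] m
      by (intro add_mono mult_left_mono order.trans[OF mult_left_le_one_le]) auto
    also have "\<dots> \<le> E m (Suc q)"
      using E_rec[OF m(1,3), of q] by (simp add: t_def c_def)
    finally show ?thesis
      using Suc by simp
  qed
qed

theorem mainTheorem7:
  fixes U :: "'a set" and v :: "'a set \<Rightarrow> real" and A :: "'a set \<Rightarrow> 'a set"
    and k l r :: nat
  assumes "finite U"
    and "k \<ge> 1"
    and "\<forall>S. S \<subseteq> U \<longrightarrow> v S \<ge> 0"
    and "monotone_set_fun U v"
    and "submodular_set_fun U v"
    and "\<forall>L. L \<subseteq> U \<longrightarrow> A L \<subseteq> L \<and> card (A L) \<le> k"
    and "k < l" and "l \<le> card U + 1"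
    and "r \<le> k"
  shows "expect_order U (\<lambda>xs. v (alg_set A xs l r)) \<ge>
    (\<Sum>j = l..card U.
       (\<Prod>i = l..j - 1. (1 - real k / real i)) / real j
       * expect_order U (\<lambda>xs. v (A (prefix_set xs j)))
       * (\<Sum>r' < r. \<Sum>M \<in> {M. M \<subseteq> {l..j - 1} \<and> card M = r'}.
            \<Prod>i\<in>M. (real k - 1) / real i))"
proof -
  define G where "G j = expect_order U (\<lambda>xs. v (A (prefix_set xs j)))" for j
  define E where "E m q = expect_order U (\<lambda>xs. v (alg_set A xs m q))" for m q
  have "alg_bound k (card U) G l r \<le> E l r"
  proof (rule alg_bound_le[OF assms(2,7,8)])
    show "0 \<le> G j" for j
      unfolding G_def
    proof (rule expect_order_v_nonneg[OF assms(3)])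
      fix xs assume "xs \<in> permutations_of_set U"
      then have "prefix_set xs j \<subseteq> U"
        using prefix_set_subset[of xs j] by (simp add: permutations_of_setD(1))
      then show "A (prefix_set xs j) \<subseteq> set xs"
        using assms(6) prefix_set_subset[of xs j] by (meson subset_trans)
    qed
    show "0 \<le> E m q" for m q
      unfolding E_def by (rule expect_order_v_nonneg[OF assms(3) alg_set_subset])
    show "G m / real m + (real k - 1) / real m * E (Suc m) q
        + (1 - real k / real m) * E (Suc m) (Suc q) \<le> E m (Suc q)"
      if "k < m" "m \<le> card U" for m q
      unfolding G_def E_def using that assms(2)
      by (intro expect_alg_set_Suc_ge[OF assms(1) _ _ assms(4-6)]) auto
  qed
  then show ?thesis
    by (simp add: alg_bound_def elem_sym_below_def elem_sym_def G_def E_def)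
qed

end
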